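(* Let $G=(V,E)$ be a connected graph, $s\in V$, $\mathcal{T}$ the layering tree of $G$ with respect to $s$, and $\ell\ge \ell(\mathcal{T})$ an integer. Suppose $u,v\in V$ belong to the same part $P$ of $\mathcal{T}$ at layer $k$. Then there is a $u$-$v$ path in $G$ all of whose vertices lie in $L_{\ge k}\cap L_{\le k+\ell+1}$; i.e. $u$ and $v$ are connected in $G\setminus(L_{\le k-1}\cup L_{\ge k+\ell+2})$.
   Context: For a connected graph $G$ and root $s\in V(G)$, the BFS layers are $L_i=\{v: d_G(s,v)=i\}$ for $i\ge 0$, with $L_{\le k}=L_0\cup\dots\cup L_k$, $L_{\ge k}=\bigcup_{j\ge k}L_j$, $L_{-1}=\emptyset$. For each $i\ge 0$, let $S_i^1,\dots,S_i^{s_i}$ be the connected components of $G\setminus L_{\le i-1}$ (i.e. of $G[L_{\ge i}]$), and let $P_i^j=S_i^j\cap L_i$; the nonempty sets $P_i^j$ are the parts at layer (depth) $i$, and the set $\mathcal{P}$ of all parts over all layers partitions $V(G)$. The layering tree $\mathcal{T}=(\mathcal{P},\mathcal{E})$ has the parts as vertices, with $(P,P')\in\mathcal{E}$ iff some $u\in P$, $u'\in P'$ are adjacent in $G$. Its length is $\ell(\mathcal{T})=\max_{P\in\mathcal{P}}\max_{u,v\in P} d_G(u,v)$ (distances measured in $G$). *)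

theory Defs
  imports Main
begin

definition graph :: "'a set \<Rightarrow> ('a \<Rightarrow> 'a \<Rightarrow> bool) \<Rightarrow> bool" where
  "graph V E \<longleftrightarrow> finite V \<and> (\<forall>u v. E u v \<longrightarrow> u \<in> V \<and> v \<in> V)
     \<and> (\<forall>u v. E u v \<longrightarrow> E v u) \<and> (\<forall>u. \<not> E u u)"

definition walk_in :: "('a \<Rightarrow> 'a \<Rightarrow> bool) \<Rightarrow> 'a set \<Rightarrow> 'a list \<Rightarrow> 'a \<Rightarrow> 'a \<Rightarrow> bool" where
  "walk_in E S p u v \<longleftrightarrow> p \<noteq> [] \<and> hd p = u \<and> last p = v \<and> set p \<subseteq> S
     \<and> (\<forall>i. Suc i < length p \<longrightarrow> E (p ! i) (p ! Suc i))"

definition path_in :: "('a \<Rightarrow> 'a \<Rightarrow> bool) \<Rightarrow> 'a set \<Rightarrow> 'a list \<Rightarrow> 'a \<Rightarrow> 'a \<Rightarrow> bool" where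
  "path_in E S p u v \<longleftrightarrow> walk_in E S p u v \<and> distinct p"

definition connected_in :: "('a \<Rightarrow> 'a \<Rightarrow> bool) \<Rightarrow> 'a set \<Rightarrow> 'a \<Rightarrow> 'a \<Rightarrow> bool" where
  "connected_in E S u v \<longleftrightarrow> (\<exists>p. walk_in E S p u v)"

definition connected_graph :: "'a set \<Rightarrow> ('a \<Rightarrow> 'a \<Rightarrow> bool) \<Rightarrow> bool" where
  "connected_graph V E \<longleftrightarrow> graph V E \<and> V \<noteq> {} \<and> (\<forall>u\<in>V. \<forall>v\<in>V. connected_in E V u v)"

definition dist :: "'a set \<Rightarrow> ('a \<Rightarrow> 'a \<Rightarrow> bool) \<Rightarrow> 'a \<Rightarrow> 'a \<Rightarrow> nat" where
  "dist V E u v = (LEAST n. \<exists>p. walk_in E V p u v \<and> length p = Suc n)"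

definition layer :: "'a set \<Rightarrow> ('a \<Rightarrow> 'a \<Rightarrow> bool) \<Rightarrow> 'a \<Rightarrow> nat \<Rightarrow> 'a set" where
  "layer V E s i = {v \<in> V. dist V E s v = i}"

definition layers_le :: "'a set \<Rightarrow> ('a \<Rightarrow> 'a \<Rightarrow> bool) \<Rightarrow> 'a \<Rightarrow> int \<Rightarrow> 'a set" where
  "layers_le V E s k = {v \<in> V. int (dist V E s v) \<le> k}"

definition layers_ge :: "'a set \<Rightarrow> ('a \<Rightarrow> 'a \<Rightarrow> bool) \<Rightarrow> 'a \<Rightarrow> int \<Rightarrow> 'a set" where
  "layers_ge V E s k = {v \<in> V. int (dist V E s v) \<ge> k}"

definition components :: "('a \<Rightarrow> 'a \<Rightarrow> bool) \<Rightarrow> 'a set \<Rightarrow> 'a set set" where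
  "components E S = {{v \<in> S. connected_in E S u v} | u. u \<in> S}"

text \<open>Parts at layer i: nonempty intersections of a component of G \ L_{\<le> i-1}
  (= G[L_{\<ge> i}]) with L_i.\<close>
definition parts_at :: "'a set \<Rightarrow> ('a \<Rightarrow> 'a \<Rightarrow> bool) \<Rightarrow> 'a \<Rightarrow> nat \<Rightarrow> 'a set set" where
  "parts_at V E s i =
     {C \<inter> layer V E s i | C. C \<in> components E (V - layers_le V E s (int i - 1))
                            \<and> C \<inter> layer V E s i \<noteq> {}}"

definition parts :: "'a set \<Rightarrow> ('a \<Rightarrow> 'a \<Rightarrow> bool) \<Rightarrow> 'a \<Rightarrow> 'a set set" where
  "parts V E s = (\<Union>i. parts_at V E s i)"

definition layering_tree_length :: "'a set \<Rightarrow> ('a \<Rightarrow> 'a \<Rightarrow> bool) \<Rightarrow> 'a \<Rightarrow> nat" where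
  "layering_tree_length V E s =
     Max {dist V E u v | u v P. P \<in> parts V E s \<and> u \<in> P \<and> v \<in> P}"

end

theory Submission
  imports Defs
begin

text \<open>
  Put r = (l + 1) div 2 and j = k + r. Two vertices of one part at layer j have distance at
  most l <= 2r, and by the triangle inequality every vertex of a shortest path between them
  lies in the layers j - r .. j + r, i.e. in k .. k + 2r, which is inside k .. k + l + 1.
  Since u and v lie in one component of G[L_{>= k}], there is a u-v walk inside L_{>= k}.
  Replace each of its vertices above layer j by an anchor: a vertex of layer j joined to it
  inside L_{>= j}, which exists along a shortest path from s. Consecutive anchors are either
  adjacent vertices of layers k .. j, or two vertices of one part at layer j; in both cases
  they are connected inside layers k .. k + l + 1. A shortest such walk is the required path.
\<close>

section \<open>Walks and connectivity in induced subgraphs\<close>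

definition induced :: "('a \<Rightarrow> 'a \<Rightarrow> bool) \<Rightarrow> 'a set \<Rightarrow> 'a \<Rightarrow> 'a \<Rightarrow> bool" where
  "induced E S x y \<longleftrightarrow> E x y \<and> x \<in> S \<and> y \<in> S"

lemma walk_in_Nil [simp]: "\<not> walk_in E S [] a b"
  by (simp add: walk_in_def)

lemma walk_in_singleton [simp]: "walk_in E S [x] a b \<longleftrightarrow> x = a \<and> x = b \<and> x \<in> S"
  by (auto simp: walk_in_def)

lemma walk_in_Cons_Cons:
  "walk_in E S (x # y # p) a b \<longleftrightarrow> x = a \<and> induced E S x y \<and> walk_in E S (y # p) y b"
  by (auto simp: walk_in_def induced_def nth_Cons split: nat.splits)

lemma walk_in_Cons_hd: "walk_in E S (x # p) a b \<Longrightarrow> x = a \<and> x \<in> S"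
  by (auto simp: walk_in_def)

lemma walk_in_append_Cons:
  "walk_in E S (xs @ w # ys) a b \<longleftrightarrow> walk_in E S (xs @ [w]) a w \<and> walk_in E S (w # ys) w b"
proof (induction xs arbitrary: a)
  case Nil
  show ?case
    using walk_in_Cons_hd[of E S w ys a b] by auto
next
  case (Cons x xs)
  note IH = Cons.IH
  show ?case
  proof (cases xs)
    case Nil
    then show ?thesis
      by (simp add: walk_in_Cons_Cons induced_def)
  next
    case (Cons y zs)
    then show ?thesis
      using IH[of y] by (simp add: walk_in_Cons_Cons)
  qed
qed

lemma walk_in_mono: "walk_in E S p a b \<Longrightarrow> set p \<subseteq> T \<Longrightarrow> walk_in E T p a b"
  by (simp add: walk_in_def)

lemma walk_in_iff_relpowp:
  "(\<exists>p. walk_in E S p a b \<and> length p = Suc n) \<longleftrightarrow> a \<in> S \<and> (induced E S ^^ n) a b"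
proof (induction n arbitrary: a)
  case 0
  have "walk_in E S p a b \<and> length p = Suc 0 \<longleftrightarrow> p = [a] \<and> a = b \<and> a \<in> S" for p
    by (auto simp: length_Suc_conv)
  then show ?case
    by auto
next
  case (Suc n)
  show ?case
  proof
    assume "\<exists>p. walk_in E S p a b \<and> length p = Suc (Suc n)"
    then obtain y q where "walk_in E S (a # y # q) a b" "length (y # q) = Suc n"
      by (auto simp: length_Suc_conv walk_in_Cons_Cons)
    then have "induced E S a y" "(induced E S ^^ n) y b"
      using Suc.IH[of y] by (auto simp: walk_in_Cons_Cons)
    then show "a \<in> S \<and> (induced E S ^^ Suc n) a b"
      by (auto simp: induced_def simp del: relpowp.simps intro: relpowp_Suc_I2)
  next
    assume "a \<in> S \<and> (induced E S ^^ Suc n) a b"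
    then obtain y where y: "induced E S a y" "(induced E S ^^ n) y b"
      by (blast elim: relpowp_Suc_E2)
    moreover from y(1) have "y \<in> S"
      by (simp add: induced_def)
    ultimately obtain q where "walk_in E S q y b" "length q = Suc n"
      using Suc.IH[of y] by blast
    moreover from this obtain q' where "q = y # q'"
      by (cases q) (auto simp: walk_in_def)
    ultimately show "\<exists>p. walk_in E S p a b \<and> length p = Suc (Suc n)"
      using y by (intro exI[of _ "a # q"]) (auto simp: walk_in_Cons_Cons)
  qed
qed

lemma connected_in_iff_rtranclp:
  "connected_in E S a b \<longleftrightarrow> a \<in> S \<and> (induced E S)\<^sup>*\<^sup>* a b"
proof -
  have "connected_in E S a b \<longleftrightarrow> (\<exists>n p. walk_in E S p a b \<and> length p = Suc n)"
    unfolding connected_in_def by (metis length_Suc_conv neq_Nil_conv walk_in_Nil)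
  then show ?thesis
    by (simp add: walk_in_iff_relpowp rtranclp_power)
qed

lemma connected_in_memD: "connected_in E S x y \<Longrightarrow> x \<in> S \<and> y \<in> S"
  unfolding connected_in_def walk_in_def by (metis hd_in_set last_in_set subsetD)

lemma connected_in_refl: "x \<in> S \<Longrightarrow> connected_in E S x x"
  by (simp add: connected_in_iff_rtranclp)

lemma connected_in_trans:
  "connected_in E S x y \<Longrightarrow> connected_in E S y z \<Longrightarrow> connected_in E S x z"
  by (auto simp: connected_in_iff_rtranclp)

lemma relpowp_induced_closed: "x \<in> S \<Longrightarrow> (induced E S ^^ n) x y \<Longrightarrow> y \<in> S"
  by (cases n) (auto simp: induced_def elim: relpowp_Suc_E)

lemma rtranclp_induced_closed: "x \<in> S \<Longrightarrow> (induced E S)\<^sup>*\<^sup>* x y \<Longrightarrow> y \<in> S"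
  by (auto simp: rtranclp_power intro: relpowp_induced_closed)

lemma symp_induced: "symp E \<Longrightarrow> symp (induced E S)"
  by (auto simp: symp_def induced_def)

lemma connected_in_sym: "symp E \<Longrightarrow> connected_in E S x y \<Longrightarrow> connected_in E S y x"
  by (meson connected_in_iff_rtranclp rtranclp_induced_closed symp_induced sympD symp_rtranclp)

lemma connected_in_edge: "induced E S x y \<Longrightarrow> connected_in E S x y"
  by (auto simp: connected_in_iff_rtranclp induced_def)

lemma connected_in_mono: "connected_in E S x y \<Longrightarrow> S \<subseteq> T \<Longrightarrow> connected_in E T x y"
  by (metis connected_in_def walk_in_def walk_in_mono subset_trans)

lemma connected_in_induct [consumes 1, case_names base step]:
  assumes "connected_in E S a b" and "P a"
    and "\<And>y z. connected_in E S a y \<Longrightarrow> induced E S y z \<Longrightarrow> P y \<Longrightarrow> P z"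
  shows "P b"
proof -
  from assms(1) have "a \<in> S" "(induced E S)\<^sup>*\<^sup>* a b"
    by (simp_all add: connected_in_iff_rtranclp)
  from this(2) show ?thesis
  proof (induction rule: rtranclp_induct)
    case base
    show ?case
      by (fact assms(2))
  next
    case (step y z)
    then show ?case
      using assms(3) \<open>a \<in> S\<close> by (simp add: connected_in_iff_rtranclp)
  qed
qed

lemma connected_in_imp_path_in: "connected_in E S a b \<Longrightarrow> \<exists>p. path_in E S p a b"
proof -
  assume "connected_in E S a b"
  then obtain p where "walk_in E S p a b"
    by (auto simp: connected_in_def)
  then show ?thesis
  proof (induction "length p" arbitrary: p rule: less_induct)
    case less
    show ?case
    proof (cases "distinct p")
      case True
      with less.prems show ?thesis
        by (auto simp: path_in_def)
    next
      case False
      then obtain xs w ys zs where p: "p = xs @ w # ys @ w # zs"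
        using not_distinct_decomp by fastforce
      have "walk_in E S (xs @ [w]) a w" "walk_in E S (w # ys @ w # zs) w b"
        using less.prems walk_in_append_Cons[of E S xs w "ys @ w # zs" a b] unfolding p by blast+
      moreover from this(2) have "walk_in E S (w # zs) w b"
        using walk_in_append_Cons[of E S "w # ys" w zs w b] by simp
      ultimately have "walk_in E S (xs @ w # zs) a b"
        using walk_in_append_Cons[of E S xs w zs a b] by blast
      moreover have "length (xs @ w # zs) < length p"
        using p by simp
      ultimately show ?thesis
        using less.hyps by blast
    qed
  qed
qed

lemma connected_in_along_relpowp:
  assumes "(induced E S ^^ n) x y"
    and "\<And>i w. i \<le> n \<Longrightarrow> (induced E S ^^ i) x w \<Longrightarrow> (induced E S ^^ (n - i)) w y \<Longrightarrow> w \<in> T"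
  shows "connected_in E T x y"
  using assms
proof (induction n arbitrary: x)
  case 0
  then show ?case
    by (auto intro: connected_in_refl)
next
  case (Suc n)
  from Suc.prems(1) obtain z where xz: "induced E S x z" and zy: "(induced E S ^^ n) z y"
    by (blast elim: relpowp_Suc_E2)
  have x_in: "x \<in> T"
    using Suc.prems(2)[OF le0 relpowp_0_I] Suc.prems(1) by (simp only: diff_zero)
  have between_z_y: "w \<in> T" if "i \<le> n" "(induced E S ^^ i) z w" "(induced E S ^^ (n - i)) w y" for i w
  proof -
    from xz that(2) have "(induced E S ^^ Suc i) x w"
      by (rule relpowp_Suc_I2)
    with that show ?thesis
      using Suc.prems(2)[of "Suc i" w] by (simp del: relpowp.simps)
  qed
  have z_in: "z \<in> T"
    using between_z_y[OF le0 relpowp_0_I] zy by (simp only: diff_zero)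
  from xz x_in z_in have "connected_in E T x z"
    by (simp add: connected_in_edge induced_def)
  moreover have "connected_in E T z y"
    using Suc.IH[OF zy between_z_y] .
  ultimately show ?case
    by (rule connected_in_trans)
qed

section \<open>Graph distance\<close>

lemma graph_symp: "graph V E \<Longrightarrow> symp E"
  by (simp add: graph_def symp_def)

lemma connected_graph_symp: "connected_graph V E \<Longrightarrow> symp E"
  unfolding connected_graph_def using graph_symp by blast

lemma graph_induced: "graph V E \<Longrightarrow> E x y \<Longrightarrow> induced E V x y"
  by (simp add: graph_def induced_def)

lemma relpowp_symp: "symp R \<Longrightarrow> (R ^^ n) x y \<Longrightarrow> (R ^^ n) y x"
proof (induction n arbitrary: y)
  case (Suc n)
  then obtain z where "(R ^^ n) x z" "R z y"
    by (auto elim: relpowp_Suc_E)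
  with Suc have "R y z" "(R ^^ n) z x"
    by (auto dest: sympD)
  then show ?case
    by (rule relpowp_Suc_I2)
qed simp

lemma dist_eq_Least: "a \<in> V \<Longrightarrow> dist V E a b = (LEAST n. (induced E V ^^ n) a b)"
  by (simp add: dist_def walk_in_iff_relpowp)

lemma dist_le_relpowp: "a \<in> V \<Longrightarrow> (induced E V ^^ n) a b \<Longrightarrow> dist V E a b \<le> n"
  by (simp add: dist_eq_Least Least_le)

lemma relpowp_dist:
  assumes "connected_graph V E" "a \<in> V" "b \<in> V"
  shows "(induced E V ^^ dist V E a b) a b"
proof -
  from assms have "\<exists>n. (induced E V ^^ n) a b"
    by (simp add: connected_graph_def connected_in_iff_rtranclp rtranclp_power)
  from LeastI_ex[OF this] show ?thesis
    using assms(2) by (simp add: dist_eq_Least)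
qed

lemma dist_commute:
  assumes "connected_graph V E" "a \<in> V" "b \<in> V"
  shows "dist V E a b = dist V E b a"
proof -
  have "symp (induced E V)"
    using symp_induced[OF connected_graph_symp[OF assms(1)]] .
  then have "dist V E b a \<le> dist V E a b" if "a \<in> V" "b \<in> V" for a b
    using that assms(1) dist_le_relpowp relpowp_dist relpowp_symp by metis
  with assms show ?thesis
    by (simp add: order_antisym)
qed

lemma dist_triangle:
  assumes "connected_graph V E" "a \<in> V" "b \<in> V" "c \<in> V"
  shows "dist V E a c \<le> dist V E a b + dist V E b c"
  using assms by (meson dist_le_relpowp relpowp_dist relpowp_trans)

lemma dist_le_one_if_edge: "graph V E \<Longrightarrow> E a b \<Longrightarrow> dist V E a b \<le> 1"
proof -
  assume "graph V E" "E a b"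
  then have "induced E V a b"
    by (rule graph_induced)
  then have "a \<in> V" "(induced E V ^^ 1) a b"
    by (simp_all only: induced_def relpowp_1)
  then show ?thesis
    by (rule dist_le_relpowp)
qed

lemma dist_root_edge_le:
  assumes "connected_graph V E" "s \<in> V" "E x y"
  shows "dist V E s y \<le> Suc (dist V E s x)"
proof -
  have "graph V E"
    using assms(1) by (simp add: connected_graph_def)
  from graph_induced[OF this assms(3)] have "x \<in> V" "y \<in> V"
    by (simp_all add: induced_def)
  then show ?thesis
    using dist_triangle[OF assms(1,2), of x y] dist_le_one_if_edge[OF \<open>graph V E\<close> assms(3)] by simp
qed

section \<open>BFS layers and the layering tree\<close>

lemma connected_in_layer_band:
  assumes cg: "connected_graph V E" and "s \<in> V" "x \<in> V" "y \<in> V"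
    and "dist V E s x = j" "dist V E s y = j" "dist V E x y \<le> 2 * r"
  shows "connected_in E {w \<in> V. j - r \<le> dist V E s w \<and> dist V E s w \<le> j + r} x y"
proof (rule connected_in_along_relpowp[OF relpowp_dist[OF cg \<open>x \<in> V\<close> \<open>y \<in> V\<close>]])
  fix i w
  assume "i \<le> dist V E x y"
    and xw: "(induced E V ^^ i) x w" and wy: "(induced E V ^^ (dist V E x y - i)) w y"
  have "w \<in> V"
    using relpowp_induced_closed[OF \<open>x \<in> V\<close> xw] .
  have "dist V E x w \<le> i" "dist V E w y \<le> dist V E x y - i"
    using dist_le_relpowp[OF \<open>x \<in> V\<close> xw] dist_le_relpowp[OF \<open>w \<in> V\<close> wy] .
  moreover have "dist V E s x \<le> dist V E s w + dist V E x w"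
    using dist_triangle[OF cg \<open>s \<in> V\<close> \<open>w \<in> V\<close> \<open>x \<in> V\<close>] dist_commute[OF cg \<open>x \<in> V\<close> \<open>w \<in> V\<close>]
    by simp
  moreover have "dist V E s y \<le> dist V E s w + dist V E w y"
    using dist_triangle[OF cg \<open>s \<in> V\<close> \<open>w \<in> V\<close> \<open>y \<in> V\<close>] .
  moreover have "dist V E s w \<le> dist V E s x + dist V E x w"
    using dist_triangle[OF cg \<open>s \<in> V\<close> \<open>x \<in> V\<close> \<open>w \<in> V\<close>] .
  moreover have "dist V E s w \<le> dist V E s y + dist V E w y"
    using dist_triangle[OF cg \<open>s \<in> V\<close> \<open>y \<in> V\<close> \<open>w \<in> V\<close>] dist_commute[OF cg \<open>y \<in> V\<close> \<open>w \<in> V\<close>]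
    by simp
  ultimately show "w \<in> {w \<in> V. j - r \<le> dist V E s w \<and> dist V E s w \<le> j + r}"
    using \<open>w \<in> V\<close> \<open>i \<le> dist V E x y\<close> assms(5-7) by auto
qed

lemma exists_layer_anchor:
  assumes cg: "connected_graph V E" and sV: "s \<in> V" and "c \<in> V" "j \<le> dist V E s c"
  shows "\<exists>c'. dist V E s c' = j \<and> connected_in E {w \<in> V. j \<le> dist V E s w} c' c"
proof -
  let ?d = "dist V E s"
  obtain m where m: "?d c = j + m"
    using assms(4) le_Suc_ex by blast
  then have "(induced E V ^^ (j + m)) s c"
    using relpowp_dist[OF cg sV \<open>c \<in> V\<close>] by simp
  then obtain c' where sc': "(induced E V ^^ j) s c'" and c'c: "(induced E V ^^ m) c' c"
    by (auto simp: relpowp_add simp del: relpowp.simps)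
  have "c' \<in> V"
    using relpowp_induced_closed[OF sV sc'] .
  have "?d c' = j"
    using dist_le_relpowp[OF sV sc'] dist_le_relpowp[OF \<open>c' \<in> V\<close> c'c] m
      dist_triangle[OF cg sV \<open>c' \<in> V\<close> \<open>c \<in> V\<close>] by linarith
  moreover have "connected_in E {w \<in> V. j \<le> ?d w} c' c"
  proof (rule connected_in_along_relpowp[OF c'c])
    fix i w
    assume "i \<le> m" "(induced E V ^^ i) c' w" and wc: "(induced E V ^^ (m - i)) w c"
    then have "w \<in> V"
      using relpowp_induced_closed[OF \<open>c' \<in> V\<close>] by blast
    then show "w \<in> {w \<in> V. j \<le> ?d w}"
      using dist_le_relpowp[OF \<open>w \<in> V\<close> wc] dist_triangle[OF cg sV \<open>w \<in> V\<close> \<open>c \<in> V\<close>] m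
      by auto
  qed
  ultimately show ?thesis
    by blast
qed

lemma Diff_layers_le: "V - layers_le V E s (int k - 1) = {w \<in> V. k \<le> dist V E s w}"
  by (auto simp: layers_le_def)

lemma parts_at_subset_layer: "P \<in> parts_at V E s k \<Longrightarrow> P \<subseteq> layer V E s k"
  by (auto simp: parts_at_def)

lemma parts_at_connected_in:
  assumes "symp E" "P \<in> parts_at V E s k" "u \<in> P" "v \<in> P"
  shows "connected_in E {w \<in> V. k \<le> dist V E s w} u v"
proof -
  let ?S = "V - layers_le V E s (int k - 1)"
  from assms(2) obtain C where C: "C \<in> components E ?S" "P = C \<inter> layer V E s k"
    unfolding parts_at_def by blast
  then obtain c where "C = {w \<in> ?S. connected_in E ?S c w}"
    unfolding components_def by blast
  with C assms(3,4) have "connected_in E ?S c u" "connected_in E ?S c v"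
    by auto
  then have "connected_in E ?S u v"
    by (blast intro: connected_in_trans connected_in_sym[OF assms(1)])
  then show ?thesis
    by (simp add: Diff_layers_le)
qed

lemma connected_in_imp_same_part:
  assumes "x \<in> layer V E s j" "y \<in> layer V E s j"
    and "connected_in E {w \<in> V. j \<le> dist V E s w} x y"
  shows "\<exists>P \<in> parts V E s. x \<in> P \<and> y \<in> P"
proof -
  let ?S = "V - layers_le V E s (int j - 1)"
  let ?C = "{w \<in> ?S. connected_in E ?S x w}"
  have "x \<in> ?S" "y \<in> ?S" "connected_in E ?S x y"
    using assms by (auto simp: Diff_layers_le layer_def)
  then have "?C \<in> components E ?S" "x \<in> ?C" "y \<in> ?C"
    by (auto simp: components_def intro: connected_in_refl)
  moreover have "?C \<inter> layer V E s j \<noteq> {}"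
    using \<open>x \<in> ?C\<close> assms(1) by blast
  ultimately have "?C \<inter> layer V E s j \<in> parts_at V E s j"
    unfolding parts_at_def by (intro CollectI exI[of _ ?C]) simp
  then have "?C \<inter> layer V E s j \<in> parts V E s"
    unfolding parts_def by (rule UN_I[OF UNIV_I])
  moreover have "x \<in> ?C \<inter> layer V E s j \<and> y \<in> ?C \<inter> layer V E s j"
    using \<open>x \<in> ?C\<close> \<open>y \<in> ?C\<close> assms(1,2) by blast
  ultimately show ?thesis
    by (rule bexI[rotated])
qed

lemma dist_le_layering_tree_length:
  assumes "finite V" "P \<in> parts V E s" "x \<in> P" "y \<in> P"
  shows "dist V E x y \<le> layering_tree_length V E s"
proof -
  let ?D = "{dist V E u v | u v P. P \<in> parts V E s \<and> u \<in> P \<and> v \<in> P}"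
  have "\<Union> (parts V E s) \<subseteq> V"
    by (auto simp: parts_def parts_at_def layer_def)
  then have "?D \<subseteq> (\<lambda>(u, v). dist V E u v) ` (V \<times> V)"
    by fastforce
  then have "finite ?D"
    by (rule finite_subset) (simp add: assms(1))
  moreover have "dist V E x y \<in> ?D"
    using assms(2-4) by blast
  ultimately show ?thesis
    unfolding layering_tree_length_def by (rule Max_ge)
qed

lemma same_layer_connected_in_band:
  assumes cg: "connected_graph V E" and "s \<in> V" and "layering_tree_length V E s \<le> 2 * r"
    and "dist V E s x = j" "dist V E s y = j"
    and conn: "connected_in E {w \<in> V. j \<le> dist V E s w} x y"
  shows "connected_in E {w \<in> V. j - r \<le> dist V E s w \<and> dist V E s w \<le> j + r} x y"
proof -
  have "finite V"
    using cg by (simp add: connected_graph_def graph_def)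
  have x: "x \<in> layer V E s j" and y: "y \<in> layer V E s j"
    using connected_in_memD[OF conn] assms(4,5) by (simp_all add: layer_def)
  obtain P where "P \<in> parts V E s" "x \<in> P" "y \<in> P"
    using connected_in_imp_same_part[OF x y conn] by blast
  then have "dist V E x y \<le> 2 * r"
    using dist_le_layering_tree_length[OF \<open>finite V\<close>] assms(3) by (meson order_trans)
  with x y show ?thesis
    using connected_in_layer_band[OF cg \<open>s \<in> V\<close>] by (simp add: layer_def)
qed

definition layer_anchor :: "'a set \<Rightarrow> ('a \<Rightarrow> 'a \<Rightarrow> bool) \<Rightarrow> 'a \<Rightarrow> nat \<Rightarrow> 'a \<Rightarrow> 'a" where
  "layer_anchor V E s j c = (if dist V E s c \<le> j then c
     else SOME c'. dist V E s c' = j \<and> connected_in E {w \<in> V. j \<le> dist V E s w} c' c)"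

lemma layer_anchor_below: "dist V E s c \<le> j \<Longrightarrow> layer_anchor V E s j c = c"
  by (simp add: layer_anchor_def)

lemma layer_anchor_above:
  assumes "connected_graph V E" "s \<in> V" "c \<in> V" "j \<le> dist V E s c"
  shows "dist V E s (layer_anchor V E s j c) = j
    \<and> connected_in E {w \<in> V. j \<le> dist V E s w} (layer_anchor V E s j c) c"
proof (cases "dist V E s c \<le> j")
  case True
  with assms(3,4) show ?thesis
    by (simp add: layer_anchor_def connected_in_refl)
next
  case False
  with someI_ex[OF exists_layer_anchor[OF assms]] show ?thesis
    by (simp add: layer_anchor_def)
qed

lemma connected_in_layer_anchor_edge:
  assumes cg: "connected_graph V E" and sV: "s \<in> V"
    and low: "\<And>w. w \<in> V \<Longrightarrow> k \<le> dist V E s w \<Longrightarrow> dist V E s w \<le> j \<Longrightarrow> w \<in> T"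
    and high: "\<And>x y. dist V E s x = j \<Longrightarrow> dist V E s y = j
      \<Longrightarrow> connected_in E {w \<in> V. j \<le> dist V E s w} x y \<Longrightarrow> connected_in E T x y"
    and yz: "induced E {w \<in> V. k \<le> dist V E s w} y z"
  shows "connected_in E T (layer_anchor V E s j y) (layer_anchor V E s j z)"
proof -
  let ?d = "dist V E s"
  let ?a = "layer_anchor V E s j"
  let ?U = "{w \<in> V. j \<le> ?d w}"
  have sym: "symp E"
    using cg by (rule connected_graph_symp)
  have ordered: "connected_in E T (?a y) (?a z)"
    if "induced E {w \<in> V. k \<le> ?d w} y z" "?d y \<le> ?d z" for y z
  proof (cases "?d z \<le> j")
    case True
    with that show ?thesis
      using low by (simp add: layer_anchor_below connected_in_edge induced_def)
  next
    case False
    have "?d z \<le> Suc (?d y)"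
      using that(1) dist_root_edge_le[OF cg sV] by (simp add: induced_def)
    with False have "j \<le> ?d y"
      by linarith
    with that False have "connected_in E ?U y z" "?d (?a y) = j" "?d (?a z) = j"
      "connected_in E ?U (?a y) y" "connected_in E ?U (?a z) z"
      using layer_anchor_above[OF cg sV] by (simp_all add: connected_in_edge induced_def)
    then have "connected_in E ?U (?a y) (?a z)"
      by (blast intro: connected_in_trans connected_in_sym[OF sym])
    with \<open>?d (?a y) = j\<close> \<open>?d (?a z) = j\<close> show ?thesis
      by (rule high)
  qed
  show ?thesis
  proof (cases "?d y \<le> ?d z")
    case True
    with yz show ?thesis
      by (rule ordered)
  next
    case False
    have "induced E {w \<in> V. k \<le> ?d w} z y"
      using sympD[OF symp_induced[OF sym] yz] .
    with False have "connected_in E T (?a z) (?a y)"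
      by (simp add: ordered)
    then show ?thesis
      by (rule connected_in_sym[OF sym])
  qed
qed

lemma connected_in_reroute:
  assumes cg: "connected_graph V E" and sV: "s \<in> V"
    and low: "\<And>w. w \<in> V \<Longrightarrow> k \<le> dist V E s w \<Longrightarrow> dist V E s w \<le> j \<Longrightarrow> w \<in> T"
    and high: "\<And>x y. dist V E s x = j \<Longrightarrow> dist V E s y = j
      \<Longrightarrow> connected_in E {w \<in> V. j \<le> dist V E s w} x y \<Longrightarrow> connected_in E T x y"
    and conn: "connected_in E {w \<in> V. k \<le> dist V E s w} a b"
    and "dist V E s a \<le> j" "dist V E s b \<le> j"
  shows "connected_in E T a b"
proof -
  have "connected_in E T a (layer_anchor V E s j b)"
    using conn
  proof (induction rule: connected_in_induct)
    case base
    from connected_in_memD[OF conn] have "a \<in> T"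
      using low \<open>dist V E s a \<le> j\<close> by simp
    then show ?case
      by (simp add: layer_anchor_below[OF \<open>dist V E s a \<le> j\<close>] connected_in_refl)
  next
    case (step y z)
    with connected_in_layer_anchor_edge[OF cg sV low high] show ?case
      by (blast intro: connected_in_trans)
  qed
  then show ?thesis
    by (simp add: layer_anchor_below[OF \<open>dist V E s b \<le> j\<close>])
qed

theorem mainTheorem3:
  fixes V :: "'a set" and E :: "'a \<Rightarrow> 'a \<Rightarrow> bool" and s u v :: 'a
    and l k :: nat and P :: "'a set"
  assumes "connected_graph V E"
    and "s \<in> V"
    and "l \<ge> layering_tree_length V E s"
    and "P \<in> parts_at V E s k"
    and "u \<in> P" and "v \<in> P"
  shows "\<exists>p. path_in E (layers_ge V E s (int k) \<inter> layers_le V E s (int k + int l + 1)) p u v"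
proof -
  let ?d = "dist V E s"
  let ?T = "{w \<in> V. k \<le> ?d w \<and> ?d w \<le> k + l + 1}"
  define r where "r = (l + 1) div 2"
  \<comment> \<open>The layers k + r - r .. k + r + r lie in k .. k + l + 1, and l \<le> 2 * r.\<close>
  have "?d u = k" "?d v = k"
    using parts_at_subset_layer[OF assms(4)] assms(5,6) by (auto simp: layer_def)
  have "connected_in E ?T u v"
  proof (rule connected_in_reroute[OF assms(1,2), where j = "k + r"])
    show "w \<in> ?T" if "w \<in> V" "k \<le> ?d w" "?d w \<le> k + r" for w
      using that by (simp add: r_def)
    show "connected_in E ?T x y"
      if "?d x = k + r" "?d y = k + r" "connected_in E {w \<in> V. k + r \<le> ?d w} x y" for x y
    proof -
      have "layering_tree_length V E s \<le> 2 * r"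
        using assms(3) unfolding r_def by linarith
      from same_layer_connected_in_band[OF assms(1,2) this that] show ?thesis
        by (rule connected_in_mono) (auto simp: r_def)
    qed
    show "connected_in E {w \<in> V. k \<le> ?d w} u v"
      by (rule parts_at_connected_in[OF connected_graph_symp[OF assms(1)] assms(4-6)])
    show "?d u \<le> k + r" "?d v \<le> k + r"
      using \<open>?d u = k\<close> \<open>?d v = k\<close> by simp_all
  qed
  then obtain p where "path_in E ?T p u v"
    using connected_in_imp_path_in by metis
  moreover have "layers_ge V E s (int k) \<inter> layers_le V E s (int k + int l + 1) = ?T"
    by (auto simp: layers_ge_def layers_le_def)
  ultimately show ?thesis
    by auto
qed

end
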